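(* For every $\mathcal{L}_{\mathrm{Int}}$-formula $A$: $A$ is a theorem of intuitionistic propositional logic if and only if $\mathsf{G}(Tr(A))$ is a theorem of the modal logic $\mathsf{K4}$.
   Context: $\mathcal{L}_{\mathrm{Int}}$-formulae are built from propositional letters and $\bot$ by $\wedge,\vee,\rightarrow$. $\mathsf{K4}$ is the normal modal logic $\mathsf{K}\oplus\Box p\rightarrow\Box\Box p$. Gödel's translation $\mathsf{G}$ from formulae with letters, $\bot,\top,\wedge,\vee,\rightarrow$ to modal formulae: $\mathsf{G}(p)=\Box p$, $\mathsf{G}(\bot)=\bot$, $\mathsf{G}(\top)=\top$, $\mathsf{G}(A\wedge B)=\mathsf{G}(A)\wedge\mathsf{G}(B)$, $\mathsf{G}(A\vee B)=\mathsf{G}(A)\vee\mathsf{G}(B)$, $\mathsf{G}(A\rightarrow B)=\Box(\mathsf{G}(A)\rightarrow\mathsf{G}(B))$. Weight: $w(p)=w(\bot)=2$, $w(A\wedge B)=w(A)(1+w(B))$, $w(A\vee B)=1+w(A)+w(B)$, $w(A\rightarrow B)=1+w(A)w(B)$. For $n\ge1$: $\top^1\rightarrow B:=\top\rightarrow B$, $\top^{n+1}\rightarrow B:=\top\rightarrow(\top^n\rightarrow B)$. Positive/negative translations: for $q$ a letter or $\bot$, $q^{+n}=\top^n\rightarrow q$, $q^{-n}=q$; for $\circ\in\{\wedge,\vee\}$, $(A\circ B)^{+n}=\top^n\rightarrow(A^{+n}\circ B^{+n})$, $(A\circ B)^{-n}=A^{-n}\circ B^{-n}$; $(A\rightarrow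 B)^{+n}=\top^n\rightarrow(A^{-n}\rightarrow B^{+n})$, $(A\rightarrow B)^{-n}=A^{+n}\rightarrow B^{-n}$. The translation is $Tr(A):=A^{+w(A)}$. *)

theory Defs
  imports Main
begin

datatype 'a fm = Atom 'a | FBot | FAnd "'a fm" "'a fm" | FOr "'a fm" "'a fm" | FImp "'a fm" "'a fm"

inductive IPC :: "'a fm \<Rightarrow> bool" where
  ax1: "IPC (FImp A (FImp B A))"
| ax2: "IPC (FImp (FImp A (FImp B C)) (FImp (FImp A B) (FImp A C)))"
| ax3: "IPC (FImp (FAnd A B) A)"
| ax4: "IPC (FImp (FAnd A B) B)"
| ax5: "IPC (FImp A (FImp B (FAnd A B)))"
| ax6: "IPC (FImp A (FOr A B))"
| ax7: "IPC (FImp B (FOr A B))"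
| ax8: "IPC (FImp (FImp A C) (FImp (FImp B C) (FImp (FOr A B) C)))"
| ax9: "IPC (FImp FBot A)"
| mp: "IPC (FImp A B) \<Longrightarrow> IPC A \<Longrightarrow> IPC B"

datatype 'a tfm = TAtom 'a | TBot | TTop | TAnd "'a tfm" "'a tfm" | TOr "'a tfm" "'a tfm"
  | TImp "'a tfm" "'a tfm"

datatype 'a mfm = MVar 'a | MBot | MTop | MAnd "'a mfm" "'a mfm" | MOr "'a mfm" "'a mfm"
  | MImp "'a mfm" "'a mfm" | MBox "'a mfm"

fun ceval :: "('a mfm \<Rightarrow> bool) \<Rightarrow> 'a mfm \<Rightarrow> bool" where
  "ceval v (MVar p) = v (MVar p)"
| "ceval v MBot = False"
| "ceval v MTop = True"
| "ceval v (MAnd A B) = (ceval v A \<and> ceval v B)"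
| "ceval v (MOr A B) = (ceval v A \<or> ceval v B)"
| "ceval v (MImp A B) = (ceval v A \<longrightarrow> ceval v B)"
| "ceval v (MBox A) = v (MBox A)"

definition tautology :: "'a mfm \<Rightarrow> bool" where
  "tautology A \<longleftrightarrow> (\<forall>v. ceval v A)"

text \<open>K4 = K + (Box p --> Box Box p): smallest set containing all tautologies,
  all instances of K and 4, closed under modus ponens and necessitation
  (closure under substitution is automatic since axioms are schemata).\<close>

inductive K4 :: "'a mfm \<Rightarrow> bool" where
  taut: "tautology A \<Longrightarrow> K4 A"
| axK: "K4 (MImp (MBox (MImp A B)) (MImp (MBox A) (MBox B)))"
| ax4: "K4 (MImp (MBox A) (MBox (MBox A)))"
| mp: "K4 (MImp A B) \<Longrightarrow> K4 A \<Longrightarrow> K4 B"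
| nec: "K4 A \<Longrightarrow> K4 (MBox A)"

fun G :: "'a tfm \<Rightarrow> 'a mfm" where
  "G (TAtom p) = MBox (MVar p)"
| "G TBot = MBot"
| "G TTop = MTop"
| "G (TAnd A B) = MAnd (G A) (G B)"
| "G (TOr A B) = MOr (G A) (G B)"
| "G (TImp A B) = MBox (MImp (G A) (G B))"

fun w :: "'a fm \<Rightarrow> nat" where
  "w (Atom p) = 2"
| "w FBot = 2"
| "w (FAnd A B) = w A * (1 + w B)"
| "w (FOr A B) = 1 + w A + w B"
| "w (FImp A B) = 1 + w A * w B"

text \<open>topimp n B is top^n --> B (only used for n >= 1; topimp 0 B = B).\<close>

fun topimp :: "nat \<Rightarrow> 'a tfm \<Rightarrow> 'a tfm" where
  "topimp 0 B = B"
| "topimp (Suc n) B = TImp TTop (topimp n B)"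

fun pos :: "nat \<Rightarrow> 'a fm \<Rightarrow> 'a tfm" and neg :: "nat \<Rightarrow> 'a fm \<Rightarrow> 'a tfm" where
  "pos n (Atom p) = topimp n (TAtom p)"
| "pos n FBot = topimp n TBot"
| "pos n (FAnd A B) = topimp n (TAnd (pos n A) (pos n B))"
| "pos n (FOr A B) = topimp n (TOr (pos n A) (pos n B))"
| "pos n (FImp A B) = topimp n (TImp (neg n A) (pos n B))"
| "neg n (Atom p) = TAtom p"
| "neg n FBot = TBot"
| "neg n (FAnd A B) = TAnd (neg n A) (neg n B)"
| "neg n (FOr A B) = TOr (neg n A) (neg n B)"
| "neg n (FImp A B) = TImp (pos n A) (neg n B)"

definition Tr :: "'a fm \<Rightarrow> 'a tfm" where
  "Tr A = pos (w A) A"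

end

theory Submission
  imports Defs
begin

text \<open>Both directions are semantic, using completeness of K4 for transitive Kripke frames and of
  IPC for preorders (both by canonical models).

  On a preorder the prefixes \<open>\<top>\<^sup>n \<rightarrow>\<close> are harmless, so \<open>G (B\<^sup>+\<^sup>n)\<close> and \<open>G (B\<^sup>-\<^sup>n)\<close>
  both hold exactly where \<open>B\<close> is forced; soundness of K4 then turns \<open>K4 \<turnstile> G (Tr A)\<close> into \<open>IPC \<turnstile> A\<close>.

  Conversely, fix a transitive model and let \<open>T\<close> be the boxed formulas out of which the
  \<open>G (B\<^sup>-\<^sup>n)\<close> are built (\<open>\<box>p\<close>, and \<open>G ((C \<rightarrow> D)\<^sup>-\<^sup>n)\<close> for implications in \<open>A\<close>); there are
  fewer than \<open>w A\<close> of them. Call a world looping if it sees a world satisfying the same formulas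
  of \<open>T\<close>. Boxed formulas persist along \<open>R\<close>, so along a path of non-looping worlds this set grows
  strictly, and every path meets a looping world within \<open>card T\<close> steps. The looping worlds,
  ordered by the reflexive closure of \<open>R\<close>, form an intuitionistic Kripke model in which truth of
  \<open>G (B\<^sup>-\<^sup>n)\<close> implies forcing of \<open>B\<close>, which implies truth of the part of \<open>G (B\<^sup>+\<^sup>n)\<close>
  under its \<open>n\<close> prefixed boxes; these \<open>n > card T\<close> boxes bridge the non-looping worlds.\<close>

lemma finitary_maximal_extension:
  assumes finitary: "\<And>\<Delta>. Q \<Delta> \<Longrightarrow> \<exists>\<Delta>0. finite \<Delta>0 \<and> \<Delta>0 \<subseteq> \<Delta> \<and> Q \<Delta>0"
    and mono: "\<And>\<Delta> \<Delta>'. Q \<Delta> \<Longrightarrow> \<Delta> \<subseteq> \<Delta>' \<Longrightarrow> Q \<Delta>'"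
    and "\<not> Q \<Gamma>"
  obtains \<Delta> where "\<Gamma> \<subseteq> \<Delta>" "\<not> Q \<Delta>" "\<And>\<phi>. \<phi> \<notin> \<Delta> \<Longrightarrow> Q (insert \<phi> \<Delta>)"
proof -
  let ?F = "{\<Delta>. \<Gamma> \<subseteq> \<Delta> \<and> \<not> Q \<Delta>}"
  have "\<forall>C\<in>chains ?F. \<exists>U\<in>?F. \<forall>X\<in>C. X \<subseteq> U"
  proof
    fix C
    assume C: "C \<in> chains ?F"
    show "\<exists>U\<in>?F. \<forall>X\<in>C. X \<subseteq> U"
    proof (cases "C = {}")
      case True
      then show ?thesis
        using \<open>\<not> Q \<Gamma>\<close> by auto
    next
      case False
      have "\<not> Q (\<Union>C)"
      proof
        assume "Q (\<Union>C)"
        then obtain \<Delta>0 where \<Delta>0: "finite \<Delta>0" "\<Delta>0 \<subseteq> \<Union>C" "Q \<Delta>0"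
          using finitary by blast
        have "subset.chain UNIV C"
          using C by (simp add: chains_def chain_subset_alt_def)
        then obtain B where "B \<in> C" "\<Delta>0 \<subseteq> B"
          using finite_subset_Union_chain[OF \<Delta>0(1,2) False] by blast
        then have "Q B"
          using mono \<Delta>0(3) by blast
        then show False
          using \<open>B \<in> C\<close> C by (auto simp: chains_def)
      qed
      moreover have "\<Gamma> \<subseteq> \<Union>C"
        using False C by (auto simp: chains_def)
      ultimately show ?thesis
        by blast
    qed
  qed
  then obtain M where M: "M \<in> ?F" "\<forall>X\<in>?F. M \<subseteq> X \<longrightarrow> X = M"
    using Zorn_Lemma2[of ?F] by blast
  show thesis
  proof
    show "\<Gamma> \<subseteq> M" "\<not> Q M"
      using M(1) by auto
    show "Q (insert \<phi> M)" if "\<phi> \<notin> M" for \<phi>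
    proof (rule ccontr)
      assume "\<not> Q (insert \<phi> M)"
      then have "insert \<phi> M \<in> ?F"
        using M(1) by auto
      then show False
        using M(2) that by blast
    qed
  qed
qed

section \<open>Kripke semantics and completeness of K4\<close>

fun meval :: "('w \<Rightarrow> 'w \<Rightarrow> bool) \<Rightarrow> ('w \<Rightarrow> 'a \<Rightarrow> bool) \<Rightarrow> 'w \<Rightarrow> 'a mfm \<Rightarrow> bool" where
  "meval R V x (MVar p) = V x p"
| "meval R V x MBot = False"
| "meval R V x MTop = True"
| "meval R V x (MAnd A B) = (meval R V x A \<and> meval R V x B)"
| "meval R V x (MOr A B) = (meval R V x A \<or> meval R V x B)"
| "meval R V x (MImp A B) = (meval R V x A \<longrightarrow> meval R V x B)"
| "meval R V x (MBox A) = (\<forall>y. R x y \<longrightarrow> meval R V y A)"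

lemma ceval_meval: "ceval (meval R V x) \<phi> = meval R V x \<phi>"
  by (induction \<phi>) auto

lemma K4_sound: "K4 \<phi> \<Longrightarrow> transp R \<Longrightarrow> meval R V x \<phi>"
proof (induction arbitrary: x rule: K4.induct)
  case (taut A)
  then show ?case
    unfolding tautology_def by (metis ceval_meval)
next
  case (ax4 A)
  then show ?case
    by (auto dest: transpD)
qed auto

fun imps :: "'a mfm list \<Rightarrow> 'a mfm \<Rightarrow> 'a mfm" where
  "imps [] \<phi> = \<phi>"
| "imps (a # L) \<phi> = MImp a (imps L \<phi>)"

lemma ceval_imps: "ceval v (imps L \<phi>) = ((\<forall>a\<in>set L. ceval v a) \<longrightarrow> ceval v \<phi>)"
  by (induction L) auto

lemma K4_imps_mp: "K4 (imps L \<phi>) \<Longrightarrow> \<forall>a\<in>set L. K4 a \<Longrightarrow> K4 \<phi>"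
  by (induction L) (auto intro: K4.mp)

lemma K4_tautological_consequence:
  assumes "\<forall>a\<in>set L. K4 a" "\<forall>v. (\<forall>a\<in>set L. ceval v a) \<longrightarrow> ceval v \<phi>"
  shows "K4 \<phi>"
proof -
  have "K4 (imps L \<phi>)"
    using assms(2) by (auto intro: K4.taut simp: tautology_def ceval_imps)
  then show ?thesis
    using K4_imps_mp assms(1) by blast
qed

lemma K4_imps_box: "K4 (imps L \<phi>) \<Longrightarrow> K4 (imps (map MBox L) (MBox \<phi>))"
proof (induction L arbitrary: \<phi>)
  case Nil
  then show ?case by (simp add: K4.nec)
next
  case (Cons a L)
  have "K4 (imps L (MImp a \<phi>))"
    using Cons.prems by (intro K4_tautological_consequence[of "[imps (a # L) \<phi>]"]) (auto simp: ceval_imps)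
  then have "K4 (imps (map MBox L) (MBox (MImp a \<phi>)))"
    using Cons.IH by blast
  then show ?case
    using K4.axK[of a \<phi>]
    by (intro K4_tautological_consequence[of "[imps (map MBox L) (MBox (MImp a \<phi>)),
          MImp (MBox (MImp a \<phi>)) (MImp (MBox a) (MBox \<phi>))]"]) (auto simp: ceval_imps)
qed

definition K4_from :: "'a mfm set \<Rightarrow> 'a mfm \<Rightarrow> bool" where
  "K4_from \<Gamma> \<phi> \<longleftrightarrow> (\<exists>L. set L \<subseteq> \<Gamma> \<and> K4 (imps L \<phi>))"

lemma K4_from_tautological_consequence:
  "\<forall>a\<in>set M. K4_from \<Gamma> a \<Longrightarrow> \<forall>v. (\<forall>a\<in>set M. ceval v a) \<longrightarrow> ceval v \<phi> \<Longrightarrow> K4_from \<Gamma> \<phi>"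
proof (induction M arbitrary: \<phi>)
  case Nil
  then have "K4 \<phi>"
    using K4_tautological_consequence[of "[]"] by simp
  then show ?case
    unfolding K4_from_def by (intro exI[of _ "[]"]) simp
next
  case (Cons a M)
  have "K4_from \<Gamma> (MImp a \<phi>)"
    using Cons by auto
  then obtain L1 where L1: "set L1 \<subseteq> \<Gamma>" "K4 (imps L1 (MImp a \<phi>))"
    unfolding K4_from_def by blast
  obtain L2 where L2: "set L2 \<subseteq> \<Gamma>" "K4 (imps L2 a)"
    using Cons.prems unfolding K4_from_def by auto
  have "K4 (imps (L2 @ L1) \<phi>)"
    using L1 L2 by (intro K4_tautological_consequence[of "[imps L2 a, imps L1 (MImp a \<phi>)]"])
      (auto simp: ceval_imps)
  then show ?case
    unfolding K4_from_def using L1 L2 by (intro exI[of _ "L2 @ L1"]) auto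
qed

lemma K4_from_assm: "\<phi> \<in> \<Gamma> \<Longrightarrow> K4_from \<Gamma> \<phi>"
  unfolding K4_from_def by (intro exI[of _ "[\<phi>]"]) (auto intro!: K4.taut simp: tautology_def)

lemma K4_from_K4: "K4 \<phi> \<Longrightarrow> K4_from \<Gamma> \<phi>"
  unfolding K4_from_def by (intro exI[of _ "[]"]) simp

lemma K4_from_deduction: "K4_from (insert a \<Gamma>) \<phi> \<Longrightarrow> K4_from \<Gamma> (MImp a \<phi>)"
proof -
  assume "K4_from (insert a \<Gamma>) \<phi>"
  then obtain L where L: "set L \<subseteq> insert a \<Gamma>" "K4 (imps L \<phi>)"
    unfolding K4_from_def by blast
  let ?L = "filter (\<lambda>x. x \<noteq> a) L"
  have "K4 (imps ?L (MImp a \<phi>))"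
    using L by (intro K4_tautological_consequence[of "[imps L \<phi>]"]) (auto simp: ceval_imps)
  then show ?thesis
    unfolding K4_from_def using L by (intro exI[of _ ?L]) auto
qed

definition maximal_consistent :: "'a mfm set \<Rightarrow> bool" where
  "maximal_consistent \<Gamma> \<longleftrightarrow> \<not> K4_from \<Gamma> MBot \<and> (\<forall>\<phi>. \<phi> \<notin> \<Gamma> \<longrightarrow> K4_from (insert \<phi> \<Gamma>) MBot)"

lemma lindenbaum:
  assumes "\<not> K4_from \<Gamma> MBot"
  obtains \<Delta> where "\<Gamma> \<subseteq> \<Delta>" "maximal_consistent \<Delta>"
proof -
  have finitary: "\<exists>\<Delta>0. finite \<Delta>0 \<and> \<Delta>0 \<subseteq> \<Delta> \<and> K4_from \<Delta>0 MBot" if "K4_from \<Delta> MBot" for \<Delta>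
    using that List.finite_set unfolding K4_from_def by blast
  have mono: "K4_from \<Delta>' MBot" if "K4_from \<Delta> MBot" "\<Delta> \<subseteq> \<Delta>'" for \<Delta> \<Delta>'
    using that unfolding K4_from_def by blast
  show thesis
  proof (rule finitary_maximal_extension[OF finitary mono assms])
    fix \<Delta>
    assume "\<Gamma> \<subseteq> \<Delta>" "\<not> K4_from \<Delta> MBot" "\<And>\<phi>. \<phi> \<notin> \<Delta> \<Longrightarrow> K4_from (insert \<phi> \<Delta>) MBot"
    then show thesis
      by (intro that[of \<Delta>]) (auto simp: maximal_consistent_def)
  qed
qed

context
  fixes \<Gamma> :: "'a mfm set"
  assumes mc: "maximal_consistent \<Gamma>"
begin

lemma mc_closed: "K4_from \<Gamma> \<phi> \<Longrightarrow> \<phi> \<in> \<Gamma>"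
proof (rule ccontr)
  assume "K4_from \<Gamma> \<phi>" "\<phi> \<notin> \<Gamma>"
  then have "K4_from (insert \<phi> \<Gamma>) MBot"
    using mc by (simp add: maximal_consistent_def)
  then have "K4_from \<Gamma> (MImp \<phi> MBot)"
    by (rule K4_from_deduction)
  then have "K4_from \<Gamma> MBot"
    using K4_from_tautological_consequence[of "[\<phi>, MImp \<phi> MBot]" \<Gamma> MBot] \<open>K4_from \<Gamma> \<phi>\<close> by auto
  then show False
    using mc by (simp add: maximal_consistent_def)
qed

lemma mc_tautological_consequence:
  assumes "set M \<subseteq> \<Gamma>" "\<forall>v. (\<forall>a\<in>set M. ceval v a) \<longrightarrow> ceval v \<phi>"
  shows "\<phi> \<in> \<Gamma>"
proof -
  have "\<forall>a\<in>set M. K4_from \<Gamma> a"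
    using assms(1) K4_from_assm by blast
  then show ?thesis
    using assms(2) by (intro mc_closed K4_from_tautological_consequence)
qed

lemma mc_MBot: "MBot \<notin> \<Gamma>"
  using mc K4_from_assm unfolding maximal_consistent_def by blast

lemma mc_MTop: "MTop \<in> \<Gamma>"
  using mc_tautological_consequence[of "[]" MTop] by simp

lemma mc_negation: "a \<notin> \<Gamma> \<Longrightarrow> MImp a MBot \<in> \<Gamma>"
  using mc by (intro mc_closed K4_from_deduction) (simp add: maximal_consistent_def)

lemma mc_MImp: "MImp a b \<in> \<Gamma> \<longleftrightarrow> (a \<in> \<Gamma> \<longrightarrow> b \<in> \<Gamma>)"
proof (intro iffI impI)
  show "b \<in> \<Gamma>" if "MImp a b \<in> \<Gamma>" "a \<in> \<Gamma>"
    by (rule mc_tautological_consequence[of "[MImp a b, a]"]) (use that in simp_all)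
  show "MImp a b \<in> \<Gamma>" if "a \<in> \<Gamma> \<longrightarrow> b \<in> \<Gamma>"
  proof (cases "a \<in> \<Gamma>")
    case True
    then show ?thesis
      by (intro mc_tautological_consequence[of "[b]"]) (use that in simp_all)
  next
    case False
    then show ?thesis
      by (intro mc_tautological_consequence[of "[MImp a MBot]"]) (simp_all add: mc_negation)
  qed
qed

lemma mc_MAnd: "MAnd a b \<in> \<Gamma> \<longleftrightarrow> a \<in> \<Gamma> \<and> b \<in> \<Gamma>"
proof (intro iffI conjI)
  assume "MAnd a b \<in> \<Gamma>"
  then show "a \<in> \<Gamma>" "b \<in> \<Gamma>"
    by (intro mc_tautological_consequence[of "[MAnd a b]"]; simp)+
next
  assume "a \<in> \<Gamma> \<and> b \<in> \<Gamma>"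
  then show "MAnd a b \<in> \<Gamma>"
    by (intro mc_tautological_consequence[of "[a, b]"]) simp_all
qed

lemma mc_MOr: "MOr a b \<in> \<Gamma> \<longleftrightarrow> a \<in> \<Gamma> \<or> b \<in> \<Gamma>"
proof
  assume "MOr a b \<in> \<Gamma>"
  then have "b \<in> \<Gamma>" if "a \<notin> \<Gamma>"
    using that by (intro mc_tautological_consequence[of "[MOr a b, MImp a MBot]"]) (auto simp: mc_negation)
  then show "a \<in> \<Gamma> \<or> b \<in> \<Gamma>"
    by blast
next
  assume "a \<in> \<Gamma> \<or> b \<in> \<Gamma>"
  then show "MOr a b \<in> \<Gamma>"
    by (elim disjE; intro mc_tautological_consequence[of "[a]"] mc_tautological_consequence[of "[b]"]) simp_all
qed

end

definition canonical_R :: "'a mfm set \<Rightarrow> 'a mfm set \<Rightarrow> bool" where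
  "canonical_R \<Gamma> \<Delta> \<longleftrightarrow> maximal_consistent \<Gamma> \<and> maximal_consistent \<Delta> \<and> (\<forall>\<phi>. MBox \<phi> \<in> \<Gamma> \<longrightarrow> \<phi> \<in> \<Delta>)"

lemma transp_canonical_R: "transp canonical_R"
proof (rule transpI)
  fix \<Gamma> \<Delta> \<Theta> :: "'a mfm set"
  assume R: "canonical_R \<Gamma> \<Delta>" "canonical_R \<Delta> \<Theta>"
  have "MBox (MBox \<phi>) \<in> \<Gamma>" if "MBox \<phi> \<in> \<Gamma>" for \<phi>
    using R that mc_closed[OF _ K4_from_K4[OF K4.ax4]] mc_MImp by (metis canonical_R_def)
  then show "canonical_R \<Gamma> \<Theta>"
    using R by (auto simp: canonical_R_def)
qed

lemma canonical_box:
  assumes "maximal_consistent \<Gamma>" "MBox \<phi> \<notin> \<Gamma>"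
  obtains \<Delta> where "canonical_R \<Gamma> \<Delta>" "\<phi> \<notin> \<Delta>"
proof -
  let ?B = "{\<psi>. MBox \<psi> \<in> \<Gamma>}"
  have "\<not> K4_from ?B \<phi>"
  proof
    assume "K4_from ?B \<phi>"
    then obtain L where "set L \<subseteq> ?B" "K4 (imps L \<phi>)"
      by (auto simp: K4_from_def)
    then have "K4_from \<Gamma> (MBox \<phi>)"
      unfolding K4_from_def using K4_imps_box by (intro exI[of _ "map MBox L"]) auto
    then show False
      using assms mc_closed by blast
  qed
  then have "\<not> K4_from (insert (MImp \<phi> MBot) ?B) MBot"
    using K4_from_deduction K4_from_tautological_consequence[of "[MImp (MImp \<phi> MBot) MBot]" ?B \<phi>]
    by auto
  then obtain \<Delta> where "insert (MImp \<phi> MBot) ?B \<subseteq> \<Delta>" "maximal_consistent \<Delta>"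
    by (rule lindenbaum)
  then show thesis
    using assms(1) mc_MImp mc_MBot by (intro that[of \<Delta>]) (auto simp: canonical_R_def)
qed

lemma canonical_truth:
  "maximal_consistent \<Gamma> \<Longrightarrow> meval canonical_R (\<lambda>\<Gamma> p. MVar p \<in> \<Gamma>) \<Gamma> \<phi> \<longleftrightarrow> \<phi> \<in> \<Gamma>"
proof (induction \<phi> arbitrary: \<Gamma>)
  case (MBox \<phi>)
  show ?case
  proof
    assume holds: "meval canonical_R (\<lambda>\<Gamma> p. MVar p \<in> \<Gamma>) \<Gamma> (MBox \<phi>)"
    show "MBox \<phi> \<in> \<Gamma>"
    proof (rule ccontr)
      assume "MBox \<phi> \<notin> \<Gamma>"
      then obtain \<Delta> where \<Delta>: "canonical_R \<Gamma> \<Delta>" "\<phi> \<notin> \<Delta>"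
        using canonical_box MBox.prems by blast
      have "maximal_consistent \<Delta>"
        using \<Delta>(1) by (simp add: canonical_R_def)
      moreover have "meval canonical_R (\<lambda>\<Gamma> p. MVar p \<in> \<Gamma>) \<Delta> \<phi>"
        using holds \<Delta>(1) by simp
      ultimately show False
        using MBox.IH \<Delta>(2) by blast
    qed
  next
    assume "MBox \<phi> \<in> \<Gamma>"
    show "meval canonical_R (\<lambda>\<Gamma> p. MVar p \<in> \<Gamma>) \<Gamma> (MBox \<phi>)"
    proof (simp only: meval.simps, intro allI impI)
      fix \<Delta>
      assume "canonical_R \<Gamma> \<Delta>"
      then have "maximal_consistent \<Delta>" "\<phi> \<in> \<Delta>"
        using \<open>MBox \<phi> \<in> \<Gamma>\<close> by (simp_all add: canonical_R_def)
      then show "meval canonical_R (\<lambda>\<Gamma> p. MVar p \<in> \<Gamma>) \<Delta> \<phi>"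
        using MBox.IH by blast
    qed
  qed
qed (simp_all add: mc_MBot mc_MTop mc_MAnd mc_MOr mc_MImp)

lemma K4_complete:
  fixes \<phi> :: "'a mfm"
  assumes "\<And>(R :: 'a mfm set \<Rightarrow> 'a mfm set \<Rightarrow> bool) V x. transp R \<Longrightarrow> meval R V x \<phi>"
  shows "K4 \<phi>"
proof (rule ccontr)
  assume "\<not> K4 \<phi>"
  have "\<not> K4_from {MImp \<phi> MBot} MBot"
  proof
    assume "K4_from {MImp \<phi> MBot} MBot"
    then obtain L where "set L \<subseteq> {MImp \<phi> MBot}" "K4 (imps L MBot)"
      unfolding K4_from_def by blast
    then have "K4 \<phi>"
      by (intro K4_tautological_consequence[of "[imps L MBot]"]) (auto simp: ceval_imps)
    with \<open>\<not> K4 \<phi>\<close> show False ..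
  qed
  then obtain \<Delta> where \<Delta>: "{MImp \<phi> MBot} \<subseteq> \<Delta>" "maximal_consistent \<Delta>"
    by (rule lindenbaum)
  have "meval canonical_R (\<lambda>\<Gamma> p. MVar p \<in> \<Gamma>) \<Delta> \<phi>"
    by (rule assms[OF transp_canonical_R])
  then have "\<phi> \<in> \<Delta>"
    using canonical_truth[OF \<Delta>(2)] by simp
  moreover have "MImp \<phi> MBot \<in> \<Delta>"
    using \<Delta>(1) by simp
  ultimately show False
    using mc_MImp[OF \<Delta>(2)] mc_MBot[OF \<Delta>(2)] by simp
qed

section \<open>Kripke semantics and completeness of intuitionistic logic\<close>

fun forces :: "('w \<Rightarrow> 'w \<Rightarrow> bool) \<Rightarrow> ('w \<Rightarrow> 'a \<Rightarrow> bool) \<Rightarrow> 'w \<Rightarrow> 'a fm \<Rightarrow> bool" where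
  "forces le V x (Atom p) = V x p"
| "forces le V x FBot = False"
| "forces le V x (FAnd A B) = (forces le V x A \<and> forces le V x B)"
| "forces le V x (FOr A B) = (forces le V x A \<or> forces le V x B)"
| "forces le V x (FImp A B) = (\<forall>y. le x y \<longrightarrow> forces le V y A \<longrightarrow> forces le V y B)"

definition persistent :: "('w \<Rightarrow> 'w \<Rightarrow> bool) \<Rightarrow> ('w \<Rightarrow> 'a \<Rightarrow> bool) \<Rightarrow> bool" where
  "persistent le V \<longleftrightarrow> (\<forall>x y p. le x y \<longrightarrow> V x p \<longrightarrow> V y p)"

lemma forces_persistent:
  assumes "transp le" "persistent le V"
  shows "le x y \<Longrightarrow> forces le V x A \<Longrightarrow> forces le V y A"
proof (induction A arbitrary: x y)
  case (Atom p)
  then show ?case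
    using assms(2) by (simp add: persistent_def)
next
  case (FImp A B)
  then show ?case
    using assms(1) by (auto dest: transpD)
qed auto

lemma IPC_sound:
  assumes refl: "reflp le" and trans: "transp le" and pers: "persistent le V"
  shows "IPC A \<Longrightarrow> forces le V x A"
proof (induction arbitrary: x rule: IPC.induct)
  case (ax1 A B)
  then show ?case
    using forces_persistent[OF trans pers] by auto
next
  case (ax2 A B C)
  show ?case
  proof (simp only: forces.simps, intro allI impI)
    fix y z u
    assume "le x y" and ABC: "\<forall>v. le y v \<longrightarrow> forces le V v A \<longrightarrow>
        (\<forall>t. le v t \<longrightarrow> forces le V t B \<longrightarrow> forces le V t C)"
      and "le y z" and AB: "\<forall>v. le z v \<longrightarrow> forces le V v A \<longrightarrow> forces le V v B"
      and "le z u" and "forces le V u A"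
    moreover have "le y u" "le u u"
      using \<open>le y z\<close> \<open>le z u\<close> refl trans by (auto dest: transpD reflpD)
    ultimately show "forces le V u C"
      using ABC AB by blast
  qed
next
  case (ax5 A B)
  then show ?case
    using forces_persistent[OF trans pers] by auto
next
  case (ax8 A C B)
  show ?case
  proof (simp only: forces.simps, intro allI impI)
    fix y z u
    assume "le x y" and AC: "\<forall>v. le y v \<longrightarrow> forces le V v A \<longrightarrow> forces le V v C"
      and "le y z" and BC: "\<forall>v. le z v \<longrightarrow> forces le V v B \<longrightarrow> forces le V v C"
      and "le z u" and "forces le V u A \<or> forces le V u B"
    moreover have "le y u" "le u u"
      using \<open>le y z\<close> \<open>le z u\<close> refl trans by (auto dest: transpD reflpD)
    ultimately show "forces le V u C"
      using AC BC by blast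
  qed
next
  case (mp A B)
  then show ?case
    using refl by (auto dest: reflpD)
qed auto

inductive IPC_from :: "'a fm set \<Rightarrow> 'a fm \<Rightarrow> bool" for \<Gamma> where
  assm: "A \<in> \<Gamma> \<Longrightarrow> IPC_from \<Gamma> A"
| ax: "IPC A \<Longrightarrow> IPC_from \<Gamma> A"
| mp: "IPC_from \<Gamma> (FImp A B) \<Longrightarrow> IPC_from \<Gamma> A \<Longrightarrow> IPC_from \<Gamma> B"

lemma IPC_from_empty: "IPC_from {} A \<Longrightarrow> IPC A"
  by (induction rule: IPC_from.induct) (auto intro: IPC.mp)

lemma IPC_FImp_refl: "IPC (FImp A A)"
  using IPC.mp[OF IPC.mp[OF IPC.ax2 IPC.ax1] IPC.ax1[of A A]] .

lemma IPC_from_deduction: "IPC_from (insert B \<Gamma>) A \<Longrightarrow> IPC_from \<Gamma> (FImp B A)"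
proof (induction rule: IPC_from.induct)
  case (assm A)
  then show ?case
    using IPC_FImp_refl IPC_from.mp[OF IPC_from.ax[OF IPC.ax1] IPC_from.assm]
    by (auto intro: IPC_from.ax)
next
  case (ax A)
  then show ?case
    using IPC_from.mp[OF IPC_from.ax[OF IPC.ax1] IPC_from.ax] by blast
next
  case (mp A C)
  then show ?case
    using IPC_from.mp[OF IPC_from.mp[OF IPC_from.ax[OF IPC.ax2]]] by blast
qed

lemma IPC_from_mono: "IPC_from \<Gamma> A \<Longrightarrow> \<Gamma> \<subseteq> \<Delta> \<Longrightarrow> IPC_from \<Delta> A"
  by (induction rule: IPC_from.induct) (auto intro: IPC_from.intros)

lemma IPC_from_finitary: "IPC_from \<Gamma> A \<Longrightarrow> \<exists>\<Gamma>0. finite \<Gamma>0 \<and> \<Gamma>0 \<subseteq> \<Gamma> \<and> IPC_from \<Gamma>0 A"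
proof (induction rule: IPC_from.induct)
  case (assm A)
  then show ?case
    by (intro exI[of _ "{A}"]) (auto intro: IPC_from.assm)
next
  case (ax A)
  then show ?case
    by (intro exI[of _ "{}"]) (auto intro: IPC_from.ax)
next
  case (mp A B)
  then obtain \<Gamma>1 \<Gamma>2 where "finite \<Gamma>1" "\<Gamma>1 \<subseteq> \<Gamma>" "IPC_from \<Gamma>1 (FImp A B)"
    "finite \<Gamma>2" "\<Gamma>2 \<subseteq> \<Gamma>" "IPC_from \<Gamma>2 A"
    by blast
  then show ?case
    by (intro exI[of _ "\<Gamma>1 \<union> \<Gamma>2"]) (auto intro: IPC_from.mp IPC_from_mono)
qed

definition prime_theory :: "'a fm set \<Rightarrow> bool" where
  "prime_theory \<Delta> \<longleftrightarrow> (\<forall>B. IPC_from \<Delta> B \<longrightarrow> B \<in> \<Delta>) \<and> FBot \<notin> \<Delta>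
    \<and> (\<forall>B C. FOr B C \<in> \<Delta> \<longrightarrow> B \<in> \<Delta> \<or> C \<in> \<Delta>)"

lemma prime_extension:
  assumes "\<not> IPC_from \<Gamma> A"
  obtains \<Delta> where "prime_theory \<Delta>" "\<Gamma> \<subseteq> \<Delta>" "A \<notin> \<Delta>"
proof (rule finitary_maximal_extension[of "\<lambda>\<Delta>. IPC_from \<Delta> A", OF IPC_from_finitary IPC_from_mono assms])
  fix \<Delta>
  assume "\<Gamma> \<subseteq> \<Delta>" and unprovable: "\<not> IPC_from \<Delta> A"
    and maximal: "\<And>B. B \<notin> \<Delta> \<Longrightarrow> IPC_from (insert B \<Delta>) A"
  have refutes: "IPC_from \<Delta> (FImp B A)" if "B \<notin> \<Delta>" for B
    using maximal[OF that] by (rule IPC_from_deduction)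
  have "B \<in> \<Delta>" if "IPC_from \<Delta> B" for B
    using refutes[of B] that unprovable IPC_from.mp by blast
  moreover have "FBot \<notin> \<Delta>"
    using unprovable IPC_from.mp[OF IPC_from.ax[OF IPC.ax9] IPC_from.assm] by blast
  moreover have "B \<in> \<Delta> \<or> C \<in> \<Delta>" if "FOr B C \<in> \<Delta>" for B C
  proof (rule ccontr)
    assume "\<not> (B \<in> \<Delta> \<or> C \<in> \<Delta>)"
    then have "IPC_from \<Delta> (FImp B A)" "IPC_from \<Delta> (FImp C A)"
      using refutes by auto
    then have "IPC_from \<Delta> A"
      using IPC_from.mp[OF IPC_from.mp[OF IPC_from.mp[OF IPC_from.ax[OF IPC.ax8]]]] IPC_from.assm[OF that]
      by blast
    with unprovable show False ..
  qed
  ultimately have "prime_theory \<Delta>"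
    unfolding prime_theory_def by blast
  moreover have "A \<notin> \<Delta>"
    using unprovable IPC_from.assm by blast
  ultimately show thesis
    using that \<open>\<Gamma> \<subseteq> \<Delta>\<close> by blast
qed

context
  fixes \<Delta> :: "'a fm set"
  assumes prime: "prime_theory \<Delta>"
begin

lemma prime_closed: "IPC_from \<Delta> B \<Longrightarrow> B \<in> \<Delta>"
  using prime by (simp add: prime_theory_def)

lemma prime_FAnd: "FAnd B C \<in> \<Delta> \<longleftrightarrow> B \<in> \<Delta> \<and> C \<in> \<Delta>"
proof
  assume "FAnd B C \<in> \<Delta>"
  then have "IPC_from \<Delta> B" "IPC_from \<Delta> C"
    by (auto intro: IPC_from.mp[OF IPC_from.ax[OF IPC.ax3]] IPC_from.mp[OF IPC_from.ax[OF IPC.ax4]]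
        IPC_from.assm)
  then show "B \<in> \<Delta> \<and> C \<in> \<Delta>"
    by (simp add: prime_closed)
next
  assume "B \<in> \<Delta> \<and> C \<in> \<Delta>"
  then have "IPC_from \<Delta> (FAnd B C)"
    by (auto intro: IPC_from.mp[OF IPC_from.mp[OF IPC_from.ax[OF IPC.ax5]]] IPC_from.assm)
  then show "FAnd B C \<in> \<Delta>"
    by (rule prime_closed)
qed

lemma prime_FOr: "FOr B C \<in> \<Delta> \<longleftrightarrow> B \<in> \<Delta> \<or> C \<in> \<Delta>"
proof
  assume "FOr B C \<in> \<Delta>"
  then show "B \<in> \<Delta> \<or> C \<in> \<Delta>"
    using prime by (simp add: prime_theory_def)
next
  assume "B \<in> \<Delta> \<or> C \<in> \<Delta>"
  then have "IPC_from \<Delta> (FOr B C)"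
    by (auto intro: IPC_from.mp[OF IPC_from.ax[OF IPC.ax6]] IPC_from.mp[OF IPC_from.ax[OF IPC.ax7]]
        IPC_from.assm)
  then show "FOr B C \<in> \<Delta>"
    by (rule prime_closed)
qed

lemma prime_FImp:
  "FImp B C \<in> \<Delta> \<longleftrightarrow> (\<forall>\<Delta>'. prime_theory \<Delta>' \<longrightarrow> \<Delta> \<subseteq> \<Delta>' \<longrightarrow> B \<in> \<Delta>' \<longrightarrow> C \<in> \<Delta>')"
proof (intro iffI allI impI)
  fix \<Delta>'
  assume "FImp B C \<in> \<Delta>" "prime_theory \<Delta>'" "\<Delta> \<subseteq> \<Delta>'" "B \<in> \<Delta>'"
  then have "IPC_from \<Delta>' C"
    by (blast intro: IPC_from.mp IPC_from.assm)
  with \<open>prime_theory \<Delta>'\<close> show "C \<in> \<Delta>'"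
    by (simp add: prime_theory_def)
next
  assume extensions: "\<forall>\<Delta>'. prime_theory \<Delta>' \<longrightarrow> \<Delta> \<subseteq> \<Delta>' \<longrightarrow> B \<in> \<Delta>' \<longrightarrow> C \<in> \<Delta>'"
  show "FImp B C \<in> \<Delta>"
  proof (rule ccontr)
    assume "FImp B C \<notin> \<Delta>"
    then have "\<not> IPC_from (insert B \<Delta>) C"
      using IPC_from_deduction prime_closed by blast
    then obtain \<Delta>' where "prime_theory \<Delta>'" "insert B \<Delta> \<subseteq> \<Delta>'" "C \<notin> \<Delta>'"
      by (rule prime_extension)
    then show False
      using extensions by blast
  qed
qed

end

text \<open>The canonical order is made reflexive on all sets of formulas, so that it is a preorder;
  from a prime theory only prime theories are reachable.\<close>

definition canonical_le :: "'a fm set \<Rightarrow> 'a fm set \<Rightarrow> bool" where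
  "canonical_le \<Delta> \<Delta>' \<longleftrightarrow> \<Delta> = \<Delta>' \<or> prime_theory \<Delta>' \<and> \<Delta> \<subseteq> \<Delta>'"

lemma canonical_le_prime: "prime_theory \<Delta> \<Longrightarrow> canonical_le \<Delta> \<Delta>' \<longleftrightarrow> prime_theory \<Delta>' \<and> \<Delta> \<subseteq> \<Delta>'"
  unfolding canonical_le_def by blast

lemma forces_canonical:
  "prime_theory \<Delta> \<Longrightarrow> forces canonical_le (\<lambda>\<Delta> p. Atom p \<in> \<Delta>) \<Delta> A \<longleftrightarrow> A \<in> \<Delta>"
proof (induction A arbitrary: \<Delta>)
  case FBot
  then show ?case
    by (simp add: prime_theory_def)
next
  case (FAnd B C)
  then show ?case
    by (simp add: prime_FAnd)
next
  case (FOr B C)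
  then show ?case
    by (simp add: prime_FOr)
next
  case (FImp B C)
  have "forces canonical_le (\<lambda>\<Delta> p. Atom p \<in> \<Delta>) \<Delta> (FImp B C)
      \<longleftrightarrow> (\<forall>\<Delta>'. prime_theory \<Delta>' \<longrightarrow> \<Delta> \<subseteq> \<Delta>' \<longrightarrow> B \<in> \<Delta>' \<longrightarrow> C \<in> \<Delta>')"
    using FImp by (auto simp: canonical_le_prime)
  then show ?case
    using prime_FImp[OF FImp.prems] by blast
qed simp

lemma IPC_complete:
  fixes A :: "'a fm"
  assumes "\<And>(le :: 'a fm set \<Rightarrow> 'a fm set \<Rightarrow> bool) V x.
    reflp le \<Longrightarrow> transp le \<Longrightarrow> persistent le V \<Longrightarrow> forces le V x A"
  shows "IPC A"
proof (rule ccontr)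
  assume "\<not> IPC A"
  then have "\<not> IPC_from {} A"
    using IPC_from_empty by blast
  then obtain \<Delta> where \<Delta>: "prime_theory \<Delta>" "A \<notin> \<Delta>"
    by (rule prime_extension)
  have "forces canonical_le (\<lambda>\<Delta> p. Atom p \<in> \<Delta>) \<Delta> A"
  proof (rule assms)
    show "reflp canonical_le"
      by (simp add: reflpI canonical_le_def)
    show "transp canonical_le"
      unfolding canonical_le_def by (rule transpI) blast
    show "persistent canonical_le (\<lambda>\<Delta> p. Atom p \<in> \<Delta>)"
      by (auto simp: persistent_def canonical_le_def)
  qed
  with \<Delta> show False
    using forces_canonical by blast
qed

section \<open>The translation on preorders\<close>

definition box_val :: "('w \<Rightarrow> 'w \<Rightarrow> bool) \<Rightarrow> ('w \<Rightarrow> 'a \<Rightarrow> bool) \<Rightarrow> 'w \<Rightarrow> 'a \<Rightarrow> bool" where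
  "box_val R V x p \<longleftrightarrow> meval R V x (MBox (MVar p))"

lemma persistent_box_val: "transp R \<Longrightarrow> persistent R (box_val R V)"
  by (auto simp: persistent_def box_val_def dest: transpD)

lemma box_val_persistent_preorder: "reflp R \<Longrightarrow> persistent R V \<Longrightarrow> box_val R V = V"
  by (auto simp: fun_eq_iff box_val_def persistent_def dest: reflpD)

context
  fixes R :: "'w \<Rightarrow> 'w \<Rightarrow> bool" and V :: "'w \<Rightarrow> 'a \<Rightarrow> bool"
  assumes refl: "reflp R" and trans: "transp R"
begin

lemma meval_G_topimp_preorder:
  assumes "\<And>x. meval R V x (G X) \<longleftrightarrow> forces R (box_val R V) x B"
  shows "meval R V x (G (topimp n X)) \<longleftrightarrow> forces R (box_val R V) x B"
proof (induction n arbitrary: x)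
  case 0
  then show ?case
    using assms by simp
next
  case (Suc n)
  then have "meval R V x (G (topimp (Suc n) X)) \<longleftrightarrow> (\<forall>y. R x y \<longrightarrow> forces R (box_val R V) y B)"
    by simp
  also have "\<dots> \<longleftrightarrow> forces R (box_val R V) x B"
    using forces_persistent[OF trans persistent_box_val[OF trans]] refl by (auto dest: reflpD)
  finally show ?case .
qed

lemma meval_G_pos_neg_preorder:
  "(\<forall>x. meval R V x (G (pos n B)) \<longleftrightarrow> forces R (box_val R V) x B)
    \<and> (\<forall>x. meval R V x (G (neg n B)) \<longleftrightarrow> forces R (box_val R V) x B)"
proof (induction B)
  case (Atom p)
  have atom: "meval R V x (G (TAtom p)) \<longleftrightarrow> forces R (box_val R V) x (Atom p)" for x
    by (simp add: box_val_def)
  show ?case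
    using meval_G_topimp_preorder[OF atom] atom by simp
next
  case FBot
  have bot: "meval R V x (G TBot) \<longleftrightarrow> forces R (box_val R V) x FBot" for x
    by simp
  show ?case
    using meval_G_topimp_preorder[OF bot] by simp
next
  case (FAnd B C)
  have "meval R V x (G (TAnd (pos n B) (pos n C))) \<longleftrightarrow> forces R (box_val R V) x (FAnd B C)" for x
    using FAnd by simp
  from meval_G_topimp_preorder[OF this] show ?case
    using FAnd by simp
next
  case (FOr B C)
  have "meval R V x (G (TOr (pos n B) (pos n C))) \<longleftrightarrow> forces R (box_val R V) x (FOr B C)" for x
    using FOr by simp
  from meval_G_topimp_preorder[OF this] show ?case
    using FOr by simp
next
  case (FImp B C)
  have "meval R V x (G (TImp (neg n B) (pos n C))) \<longleftrightarrow> forces R (box_val R V) x (FImp B C)" for x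
    using FImp by simp
  from meval_G_topimp_preorder[OF this] show ?case
    using FImp by simp
qed

end

lemma IPC_if_K4_G_Tr:
  fixes A :: "'a fm"
  assumes "K4 (G (Tr A))"
  shows "IPC A"
proof (rule IPC_complete)
  fix le :: "'a fm set \<Rightarrow> 'a fm set \<Rightarrow> bool" and V :: "'a fm set \<Rightarrow> 'a \<Rightarrow> bool" and x
  assume refl: "reflp le" and trans: "transp le" and pers: "persistent le V"
  have "meval le V x (G (pos (w A) A))"
    using K4_sound[OF assms trans] by (simp add: Tr_def)
  then have "forces le (box_val le V) x A"
    using meval_G_pos_neg_preorder[OF refl trans] by blast
  then show "forces le V x A"
    by (simp add: box_val_persistent_preorder[OF refl pers])
qed

section \<open>Validity of the translation on transitive frames\<close>

fun box_top :: "nat \<Rightarrow> 'a mfm \<Rightarrow> 'a mfm" where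
  "box_top 0 \<phi> = \<phi>"
| "box_top (Suc k) \<phi> = MBox (MImp MTop (box_top k \<phi>))"

lemma G_topimp: "G (topimp k X) = box_top k (G X)"
  by (induction k) auto

fun pos_body :: "nat \<Rightarrow> 'a fm \<Rightarrow> 'a tfm" where
  "pos_body n (Atom p) = TAtom p"
| "pos_body n FBot = TBot"
| "pos_body n (FAnd A B) = TAnd (pos n A) (pos n B)"
| "pos_body n (FOr A B) = TOr (pos n A) (pos n B)"
| "pos_body n (FImp A B) = TImp (neg n A) (pos n B)"

lemma G_pos: "G (pos n B) = box_top n (G (pos_body n B))"
  by (cases B) (simp_all add: G_topimp)

fun neg_boxes :: "nat \<Rightarrow> 'a fm \<Rightarrow> 'a mfm set" where
  "neg_boxes n (Atom p) = {MBox (MVar p)}"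
| "neg_boxes n FBot = {}"
| "neg_boxes n (FAnd A B) = neg_boxes n A \<union> neg_boxes n B"
| "neg_boxes n (FOr A B) = neg_boxes n A \<union> neg_boxes n B"
| "neg_boxes n (FImp A B) = {G (neg n (FImp A B))}"

fun sub_neg_boxes :: "nat \<Rightarrow> 'a fm \<Rightarrow> 'a mfm set" where
  "sub_neg_boxes n (Atom p) = {MBox (MVar p)}"
| "sub_neg_boxes n FBot = {}"
| "sub_neg_boxes n (FAnd A B) = sub_neg_boxes n A \<union> sub_neg_boxes n B"
| "sub_neg_boxes n (FOr A B) = sub_neg_boxes n A \<union> sub_neg_boxes n B"
| "sub_neg_boxes n (FImp A B) = insert (G (neg n (FImp A B))) (sub_neg_boxes n A \<union> sub_neg_boxes n B)"

fun box_count :: "'a fm \<Rightarrow> nat" where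
  "box_count (Atom p) = 1"
| "box_count FBot = 0"
| "box_count (FAnd A B) = box_count A + box_count B"
| "box_count (FOr A B) = box_count A + box_count B"
| "box_count (FImp A B) = Suc (box_count A + box_count B)"

lemma neg_boxes_subset: "neg_boxes n B \<subseteq> sub_neg_boxes n B"
  by (induction B) auto

lemma finite_sub_neg_boxes: "finite (sub_neg_boxes n B)"
  by (induction B) auto

lemma sub_neg_boxes_boxed: "sub_neg_boxes n B \<subseteq> range MBox"
  by (induction B) auto

lemma card_sub_neg_boxes: "card (sub_neg_boxes n B) \<le> box_count B"
proof (induction B)
  case (FAnd A B)
  then show ?case
    using card_Un_le[of "sub_neg_boxes n A" "sub_neg_boxes n B"] by simp
next
  case (FOr A B)
  then show ?case
    using card_Un_le[of "sub_neg_boxes n A" "sub_neg_boxes n B"] by simp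
next
  case (FImp A B)
  have "card (sub_neg_boxes n (FImp A B)) \<le> Suc (card (sub_neg_boxes n A \<union> sub_neg_boxes n B))"
    by (simp add: card_insert_if finite_sub_neg_boxes)
  then show ?case
    using FImp card_Un_le[of "sub_neg_boxes n A" "sub_neg_boxes n B"] by simp
qed auto

lemma w_ge_2: "2 \<le> w A"
proof (induction A)
  case (FAnd A B)
  have "w A * 1 \<le> w A * (1 + w B)"
    by (rule mult_le_mono2) simp
  then show ?case
    using FAnd by simp
next
  case (FImp A B)
  have "1 * 1 \<le> w A * w B"
    using FImp by (intro mult_le_mono) auto
  then show ?case
    by simp
qed auto

lemma box_count_less_w: "box_count A < w A"
proof (induction A)
  case (FAnd A B)
  have "2 * w B \<le> w A * w B"
    using w_ge_2[of A] by (rule mult_le_mono1)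
  moreover have "w (FAnd A B) = w A + w A * w B"
    by (simp add: algebra_simps)
  ultimately show ?case
    unfolding box_count.simps using FAnd.IH by linarith
next
  case (FImp A B)
  have "2 * w B \<le> w A * w B"
    using w_ge_2[of A] by (rule mult_le_mono1)
  moreover have "2 * w A \<le> w A * w B"
    using w_ge_2[of B] mult_le_mono2[of 2 "w B" "w A"] by (simp add: mult.commute)
  ultimately show ?case
    unfolding box_count.simps w.simps using FImp.IH by linarith
qed auto

locale transitive_model =
  fixes R :: "'w \<Rightarrow> 'w \<Rightarrow> bool" and V :: "'w \<Rightarrow> 'a \<Rightarrow> bool"
  assumes trans: "transp R"
begin

abbreviation holds :: "'w \<Rightarrow> 'a mfm \<Rightarrow> bool" where
  "holds x \<phi> \<equiv> meval R V x \<phi>"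

lemma holds_boxed_persistent:
  assumes "\<phi> \<in> range MBox" "R x y" "holds x \<phi>"
  shows "holds y \<phi>"
proof -
  obtain \<psi> where "\<phi> = MBox \<psi>"
    using assms(1) by blast
  with assms(2,3) show ?thesis
    using transpD[OF trans] by simp
qed

lemma holds_box_top_Suc: "\<forall>y. R x y \<longrightarrow> holds y \<phi> \<Longrightarrow> holds x (box_top (Suc k) \<phi>)"
proof (induction k arbitrary: x)
  case (Suc k)
  have "holds y (box_top (Suc k) \<phi>)" if "R x y" for y
  proof (rule Suc.IH)
    show "\<forall>z. R y z \<longrightarrow> holds z \<phi>"
      using Suc.prems that transpD[OF trans] by blast
  qed
  then show ?case
    by simp
qed simp

lemma holds_G_neg_persistent: "R x y \<Longrightarrow> holds x (G (neg n B)) \<Longrightarrow> holds y (G (neg n B))"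
proof (induction B)
  case (Atom p)
  then show ?case
    using holds_boxed_persistent by (metis G.simps(1) neg.simps(1) rangeI)
next
  case (FImp B C)
  then show ?case
    using holds_boxed_persistent by (metis G.simps(6) neg.simps(5) rangeI)
qed auto

lemma G_pos_boxed: "0 < n \<Longrightarrow> G (pos n B) \<in> range MBox"
  by (cases n) (simp_all add: G_pos)

lemma holds_G_pos_body_persistent:
  assumes "0 < n" "R x y" "holds x (G (pos_body n B))"
  shows "holds y (G (pos_body n B))"
proof -
  have pos: "holds y (G (pos n C))" if "holds x (G (pos n C))" for C
    using holds_boxed_persistent[OF G_pos_boxed[OF assms(1)] assms(2) that] .
  show ?thesis
  proof (cases B)
    case (Atom p)
    then show ?thesis
      using assms(2,3) transpD[OF trans] by simp
  next
    case (FImp B C)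
    then show ?thesis
      using assms(2,3) transpD[OF trans] by simp
  qed (use assms(3) pos in auto)
qed

lemma holds_G_pos_if_pos_body:
  assumes "0 < n" "holds x (G (pos_body n B))"
  shows "holds x (G (pos n B))"
proof -
  obtain k where k: "n = Suc k"
    using assms(1) gr0_implies_Suc by blast
  have "holds x (box_top (Suc k) (G (pos_body n B)))"
    using holds_G_pos_body_persistent[OF assms(1) _ assms(2)] by (intro holds_box_top_Suc) blast
  then show ?thesis
    by (simp only: G_pos k)
qed

lemma holds_G_neg_determined:
  "\<forall>\<phi>\<in>neg_boxes n B. holds x \<phi> \<longleftrightarrow> holds u \<phi> \<Longrightarrow> holds x (G (neg n B)) \<longleftrightarrow> holds u (G (neg n B))"
proof (induction B)
  case (FImp B C)
  then show ?case
    by (simp only: neg_boxes.simps) blast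
qed auto

end

locale loop_model = transitive_model R V
  for R :: "'w \<Rightarrow> 'w \<Rightarrow> bool" and V :: "'w \<Rightarrow> 'a \<Rightarrow> bool" +
  fixes T :: "'a mfm set" and n :: nat
  assumes finite_T: "finite T" and T_boxed: "T \<subseteq> range MBox" and card_T_less: "card T < n"
begin

lemma n_pos: "0 < n"
  using card_T_less by simp

definition type_at :: "'w \<Rightarrow> 'a mfm set" where
  "type_at z = {\<phi> \<in> T. holds z \<phi>}"

definition looping :: "'w \<Rightarrow> bool" where
  "looping z \<longleftrightarrow> (\<exists>u. R z u \<and> type_at u = type_at z)"

lemma type_at_mono: "R z z' \<Longrightarrow> type_at z \<subseteq> type_at z'"
  using T_boxed holds_boxed_persistent unfolding type_at_def by blast

lemma holds_box_top_if_looping: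
  assumes "card (T - type_at z) < k"
    and "\<And>v v'. v = z \<or> R z v \<Longrightarrow> looping v \<Longrightarrow> R v v' \<Longrightarrow> holds v' \<Psi>"
  shows "holds z (box_top k \<Psi>)"
  using assms
proof (induction k arbitrary: z)
  case (Suc k)
  show ?case
  proof (cases "looping z")
    case True
    then show ?thesis
      using Suc.prems(2) holds_box_top_Suc by blast
  next
    case False
    have "holds y (box_top k \<Psi>)" if "R z y" for y
    proof (rule Suc.IH)
      have "type_at z \<subset> type_at y"
        using type_at_mono[OF that] False that unfolding looping_def by blast
      moreover have "type_at y \<subseteq> T"
        unfolding type_at_def by blast
      ultimately have "card (T - type_at y) < card (T - type_at z)"
        using finite_T by (intro psubset_card_mono) auto
      then show "card (T - type_at y) < k"
        using Suc.prems(1) by simp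
      show "holds v' \<Psi>" if "v = y \<or> R y v" "looping v" "R v v'" for v v'
        using Suc.prems(2) \<open>R z y\<close> that trans by (blast dest: transpD)
    qed
    then show ?thesis
      by simp
  qed
qed simp

lemma holds_box_top_n_if_looping:
  "(\<And>v v'. v = z \<or> R z v \<Longrightarrow> looping v \<Longrightarrow> R v v' \<Longrightarrow> holds v' \<Psi>) \<Longrightarrow> holds z (box_top n \<Psi>)"
  using card_T_less card_mono[OF finite_T, of "T - type_at z"]
  by (intro holds_box_top_if_looping) auto

definition loop_le :: "'w \<Rightarrow> 'w \<Rightarrow> bool" where
  "loop_le x y \<longleftrightarrow> x = y \<or> R x y \<and> looping y"

lemma reflp_loop_le: "reflp loop_le"
  by (simp add: reflpI loop_le_def)

lemma transp_loop_le: "transp loop_le"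
  using trans unfolding loop_le_def by (auto intro!: transpI dest: transpD)

lemma persistent_loop_le: "persistent loop_le (box_val R V)"
  using persistent_box_val[OF trans, of V] unfolding loop_le_def persistent_def by blast

abbreviation forces_loop :: "'w \<Rightarrow> 'a fm \<Rightarrow> bool" where
  "forces_loop x A \<equiv> forces loop_le (box_val R V) x A"

lemma forces_FImp_if_G_neg:
  assumes "looping y" "neg_boxes n C \<subseteq> T"
    and pos_B: "\<And>v. looping v \<Longrightarrow> forces_loop v B \<Longrightarrow> holds v (G (pos n B))"
    and neg_C: "\<And>v. looping v \<Longrightarrow> holds v (G (neg n C)) \<Longrightarrow> forces_loop v C"
    and neg_BC: "holds y (G (neg n (FImp B C)))"
  shows "forces_loop y (FImp B C)"
proof -
  have successors: "\<forall>z. R y z \<longrightarrow> holds z (G (pos n B)) \<longrightarrow> holds z (G (neg n C))"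
    using neg_BC by simp
  obtain u where u: "R y u" "type_at u = type_at y"
    using \<open>looping y\<close> unfolding looping_def by blast
  have at_y: "holds y (G (neg n C))" if "holds y (G (pos n B))"
  proof -
    have "holds u (G (pos n B))"
      using holds_boxed_persistent[OF G_pos_boxed[OF n_pos] u(1) that] .
    then have "holds u (G (neg n C))"
      using successors u(1) by blast
    moreover have "\<forall>\<phi>\<in>neg_boxes n C. holds y \<phi> \<longleftrightarrow> holds u \<phi>"
      using u(2) \<open>neg_boxes n C \<subseteq> T\<close> unfolding type_at_def by blast
    ultimately show ?thesis
      using holds_G_neg_determined by blast
  qed
  show ?thesis
  proof (simp only: forces.simps, intro allI impI)
    fix v
    assume "loop_le y v" "forces_loop v B"
    then have "looping v" "v = y \<or> R y v"
      using \<open>looping y\<close> unfolding loop_le_def by auto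
    then have "holds v (G (neg n C))"
      using pos_B[OF \<open>looping v\<close> \<open>forces_loop v B\<close>] at_y successors by blast
    then show "forces_loop v C"
      using neg_C[OF \<open>looping v\<close>] by blast
  qed
qed

lemma holds_G_pos_body_FImp_if_forces:
  assumes neg_B: "\<And>v. looping v \<Longrightarrow> holds v (G (neg n B)) \<Longrightarrow> forces_loop v B"
    and body_C: "\<And>v. looping v \<Longrightarrow> forces_loop v C \<Longrightarrow> holds v (G (pos_body n C))"
    and forces_BC: "forces_loop y (FImp B C)"
  shows "holds y (G (pos_body n (FImp B C)))"
proof -
  have "holds z (box_top n (G (pos_body n C)))" if "R y z" "holds z (G (neg n B))" for z
  proof (rule holds_box_top_n_if_looping)
    fix v v'
    assume "v = z \<or> R z v" "looping v" "R v v'"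
    then have "R y v" "holds v (G (neg n B))"
      using that trans holds_G_neg_persistent by (blast dest: transpD)+
    then have "forces_loop v C"
      using forces_BC neg_B[OF \<open>looping v\<close>] \<open>looping v\<close> by (simp add: loop_le_def)
    then show "holds v' (G (pos_body n C))"
      using holds_G_pos_body_persistent[OF n_pos \<open>R v v'\<close>] body_C \<open>looping v\<close> by blast
  qed
  then show ?thesis
    by (simp add: G_pos)
qed

lemma G_neg_forces_G_pos_body:
  "sub_neg_boxes n B \<subseteq> T \<Longrightarrow>
    (\<forall>y. looping y \<longrightarrow> holds y (G (neg n B)) \<longrightarrow> forces_loop y B)
    \<and> (\<forall>y. looping y \<longrightarrow> forces_loop y B \<longrightarrow> holds y (G (pos_body n B)))"
proof (induction B)
  case (Atom p)
  then show ?case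
    by (simp add: box_val_def)
next
  case (FAnd B C)
  then show ?case
    using holds_G_pos_if_pos_body[OF n_pos] by auto
next
  case (FOr B C)
  then show ?case
    using holds_G_pos_if_pos_body[OF n_pos] by auto
next
  case (FImp B C)
  then have IH: "\<And>y. looping y \<Longrightarrow> holds y (G (neg n B)) \<Longrightarrow> forces_loop y B"
    "\<And>y. looping y \<Longrightarrow> forces_loop y B \<Longrightarrow> holds y (G (pos n B))"
    "\<And>y. looping y \<Longrightarrow> holds y (G (neg n C)) \<Longrightarrow> forces_loop y C"
    "\<And>y. looping y \<Longrightarrow> forces_loop y C \<Longrightarrow> holds y (G (pos_body n C))"
    using holds_G_pos_if_pos_body[OF n_pos] by auto
  have "neg_boxes n C \<subseteq> T"
    using FImp.prems neg_boxes_subset by fastforce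
  then show ?case
    using forces_FImp_if_G_neg[OF _ _ IH(2,3)] holds_G_pos_body_FImp_if_forces[OF IH(1,4)] by blast
qed simp

lemma holds_G_pos_if_IPC:
  assumes "IPC A" "sub_neg_boxes n A \<subseteq> T"
  shows "holds x (G (pos n A))"
proof -
  have "holds x (box_top n (G (pos_body n A)))"
  proof (rule holds_box_top_n_if_looping)
    fix v v'
    assume "looping v" "R v v'"
    have "forces_loop v A"
      using IPC_sound[OF reflp_loop_le transp_loop_le persistent_loop_le \<open>IPC A\<close>] .
    then have "holds v (G (pos_body n A))"
      using G_neg_forces_G_pos_body[OF assms(2)] \<open>looping v\<close> by blast
    then show "holds v' (G (pos_body n A))"
      using holds_G_pos_body_persistent[OF n_pos \<open>R v v'\<close>] by blast
  qed
  then show ?thesis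
    by (simp add: G_pos)
qed

end

theorem mainTheorem14:
  fixes A :: "'a fm"
  shows "IPC A \<longleftrightarrow> K4 (G (Tr A))"
proof
  assume "IPC A"
  show "K4 (G (Tr A))"
  proof (rule K4_complete)
    fix R :: "'a mfm set \<Rightarrow> 'a mfm set \<Rightarrow> bool" and V x
    assume "transp R"
    then interpret loop_model R V "sub_neg_boxes (w A) A" "w A"
    proof unfold_locales
      show "card (sub_neg_boxes (w A) A) < w A"
        using card_sub_neg_boxes box_count_less_w by (rule le_less_trans)
    qed (simp_all add: finite_sub_neg_boxes sub_neg_boxes_boxed)
    show "meval R V x (G (Tr A))"
      using holds_G_pos_if_IPC[OF \<open>IPC A\<close>] by (simp add: Tr_def)
  qed
next
  assume "K4 (G (Tr A))"
  then show "IPC A"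
    by (rule IPC_if_K4_G_Tr)
qed

end
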